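(* Let $a_x,b_x$ be linearly independent linear forms. (B) For a quadratic form $f$: $J^2[f,a_xb_x,u_x^2]=0$ (identically in $u$) iff $f=a_0a_x^2+b_0b_x^2$ for some $a_0,b_0\in\mathbb C$. (C) For a cubic form $f$: $J^2[f,a_xb_x,u_x^2]=0$ (identically in $x$ and $u$) iff $f=a_0a_x^3+b_0b_x^3$ for some $a_0,b_0\in\mathbb C$.
   Context: Forms are homogeneous polynomials with complex coefficients in $x=(x_1,x_2,x_3)$. For $a\in\mathbb C^3$, $a_x=\sum a_ix_i$. The variables $u=(u_1,u_2,u_3)$ are indeterminates with $u_x=\sum u_ix_i$. The second transvectant is $J^2[f,g,h]=\big(\Omega^2(f(x)g(y)h(z))\big)|_{y=z=x}$, where $\Omega$ is the determinant of the operator matrix with rows $(\partial/\partial x_i)$, $(\partial/\partial y_i)$, $(\partial/\partial z_i)$, and $u$ is treated as constant. *)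

theory Defs
  imports "HOL-Analysis.Analysis"
begin

text \<open>Points of C^3 are vectors of type complex^3. A form is represented by
its polynomial function C^3 -> C.\<close>

definition lform :: "complex^3 \<Rightarrow> complex^3 \<Rightarrow> complex" where
  "lform a x = (\<Sum>i\<in>UNIV. a$i * x$i)"

definition is_quadratic_form :: "(complex^3 \<Rightarrow> complex) \<Rightarrow> bool" where
  "is_quadratic_form f \<longleftrightarrow>
     (\<exists>c :: 3 \<Rightarrow> 3 \<Rightarrow> complex. f = (\<lambda>x. \<Sum>i\<in>UNIV. \<Sum>j\<in>UNIV. c i j * x$i * x$j))"

definition is_cubic_form :: "(complex^3 \<Rightarrow> complex) \<Rightarrow> bool" where
  "is_cubic_form f \<longleftrightarrow>
     (\<exists>c :: 3 \<Rightarrow> 3 \<Rightarrow> 3 \<Rightarrow> complex.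
        f = (\<lambda>x. \<Sum>i\<in>UNIV. \<Sum>j\<in>UNIV. \<Sum>k\<in>UNIV. c i j k * x$i * x$j * x$k))"

definition pd :: "3 \<Rightarrow> (complex^3 \<Rightarrow> complex) \<Rightarrow> complex^3 \<Rightarrow> complex" where
  "pd i f x = deriv (\<lambda>t. f (x + t *s axis i 1)) 0"

text \<open>Second transvectant: Omega^2 applied to f(x)g(y)h(z), then y = z = x.
  Expanding Omega = sum over sigma of sgn(sigma) d_{x,sigma 1} d_{y,sigma 2} d_{z,sigma 3},
  Omega^2 (f(x) g(y) h(z)) is the double sum below (with x,y,z separate); setting y=z=x gives:\<close>
definition J2 :: "(complex^3 \<Rightarrow> complex) \<Rightarrow> (complex^3 \<Rightarrow> complex) \<Rightarrow> (complex^3 \<Rightarrow> complex)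
                   \<Rightarrow> complex^3 \<Rightarrow> complex" where
  "J2 f g h x = (\<Sum>\<sigma>\<in>{\<sigma>. \<sigma> permutes (UNIV :: 3 set)}. \<Sum>\<tau>\<in>{\<tau>. \<tau> permutes (UNIV :: 3 set)}.
      of_int (sign \<sigma> * sign \<tau>)
      * pd (\<sigma> 1) (pd (\<tau> 1) f) x
      * pd (\<sigma> 2) (pd (\<tau> 2) g) x
      * pd (\<sigma> 3) (pd (\<tau> 3) h) x)"

end

theory Submission
  imports Defs
begin

text \<open>The transvectant only sees Hessians: if \<open>A\<close> is the (symmetric) Hessian of \<open>f\<close> at \<open>x\<close>, then
  \<open>J\<^sup>2[f, a\<^sub>x b\<^sub>x, u\<^sub>x\<^sup>2](x) = 4 (a \<times> u)\<^sup>T A (b \<times> u)\<close>.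
  If this vanishes for all \<open>u\<close>, pick \<open>e\<close> with \<open>det(a, b, e) \<noteq> 0\<close>; polarisation in \<open>u\<close>
  shows that \<open>A\<close> is diagonal with zero last entry in the basis \<open>b \<times> e, e \<times> a, a \<times> b\<close>,
  whose dual coordinates are \<open>a\<^sub>x, b\<^sub>x, e\<^sub>x\<close>; hence \<open>x\<^sup>T A x\<close> is a
  combination of \<open>a\<^sub>x\<^sup>2\<close> and \<open>b\<^sub>x\<^sup>2\<close>. A quadratic \<open>f\<close> is half its constant Hessian
  form. For a cubic \<open>f\<close> the Hessian \<open>H(y)\<close> is linear in \<open>y\<close> and \<open>H(y)(v, w)\<close> is a
  symmetric trilinear form, so the same argument applied once more in the first slot gives
  \<open>f = \<alpha> a\<^sub>x\<^sup>3 + \<beta> b\<^sub>x\<^sup>3\<close>. Conversely the Hessian of \<open>\<alpha> a\<^sub>x\<^sup>n + \<beta> b\<^sub>x\<^sup>n\<close> is a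
  combination of \<open>a a\<^sup>T\<close> and \<open>b b\<^sup>T\<close>, which vanishes on \<open>(a \<times> u, b \<times> u)\<close>.\<close>

lemma pd_eq_of_cubic_restriction:
  assumes "\<And>t. f (x + t *s axis i 1) = A + B * t + C * t^2 + D * t^3"
  shows "pd i f x = B"
proof -
  have "((\<lambda>t. A + B * t + C * t^2 + D * t^3) has_field_derivative B) (at 0)"
    by (rule derivative_eq_intros refl | simp)+
  then show ?thesis
    unfolding pd_def using assms DERIV_imp_deriv by simp
qed

lemma lform_add_axis: "lform a (x + t *s axis i 1) = lform a x + t * a$i"
  using exhaust_3[of i] by (auto simp: lform_def sum_3 axis_def algebra_simps)

lemma pd_linear_form: "pd j (\<lambda>x. \<Sum>l\<in>UNIV. d l * x$l) x = d j"
  by (rule pd_eq_of_cubic_restriction[where A="\<Sum>l\<in>UNIV. d l * x$l" and C=0 and D=0])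
    (use exhaust_3[of j] in \<open>auto simp: sum_3 axis_def algebra_simps\<close>)

lemma pd_quadratic_form:
  "pd j (\<lambda>x. \<Sum>i\<in>UNIV. \<Sum>k\<in>UNIV. c i k * x$i * x$k) x = (\<Sum>l\<in>UNIV. (c j l + c l j) * x$l)"
  by (rule pd_eq_of_cubic_restriction
        [where A="\<Sum>i\<in>UNIV. \<Sum>k\<in>UNIV. c i k * x$i * x$k" and C="c j j" and D=0])
    (use exhaust_3[of j] in \<open>auto simp: sum_3 axis_def algebra_simps power2_eq_square\<close>)

lemma pd_cubic_form:
  "pd j (\<lambda>x. \<Sum>i\<in>UNIV. \<Sum>k\<in>UNIV. \<Sum>m\<in>UNIV. c i k m * x$i * x$k * x$m) x
    = (\<Sum>k\<in>UNIV. \<Sum>l\<in>UNIV. (c j k l + c k j l + c k l j) * x$k * x$l)"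
  by (rule pd_eq_of_cubic_restriction
        [where A="\<Sum>i\<in>UNIV. \<Sum>k\<in>UNIV. \<Sum>m\<in>UNIV. c i k m * x$i * x$k * x$m"
           and C="\<Sum>l\<in>UNIV. (c j j l + c j l j + c l j j) * x$l" and D="c j j j"])
    (use exhaust_3[of j] in \<open>auto simp: sum_3 axis_def algebra_simps power2_eq_square power3_eq_cube\<close>)

lemma pd_lform_power_combination:
  "pd i (\<lambda>x. \<alpha> * lform a x ^ Suc n + \<beta> * lform b x ^ Suc n) x
     = of_nat (Suc n) * \<alpha> * a$i * lform a x ^ n + of_nat (Suc n) * \<beta> * b$i * lform b x ^ n"
proof -
  have "((\<lambda>t. \<alpha> * (lform a x + t * a$i) ^ Suc n + \<beta> * (lform b x + t * b$i) ^ Suc n)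
          has_field_derivative
          of_nat (Suc n) * \<alpha> * a$i * lform a x ^ n + of_nat (Suc n) * \<beta> * b$i * lform b x ^ n) (at 0)"
    by (rule derivative_eq_intros refl | simp)+
  then show ?thesis
    unfolding pd_def lform_add_axis using DERIV_imp_deriv by blast
qed

definition hessian :: "(complex^3 \<Rightarrow> complex) \<Rightarrow> complex^3 \<Rightarrow> 3 \<Rightarrow> 3 \<Rightarrow> complex" where
  "hessian f x i j = pd i (pd j f) x"

lemma hessian_quadratic_form:
  "hessian (\<lambda>x. \<Sum>i\<in>UNIV. \<Sum>k\<in>UNIV. c i k * x$i * x$k) x i j = c j i + c i j"
  unfolding hessian_def pd_quadratic_form pd_linear_form ..

lemma hessian_lform_product:
  "hessian (\<lambda>x. lform a x * lform b x) x i j = a$j * b$i + a$i * b$j"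
proof -
  have "(\<lambda>x. lform a x * lform b x) = (\<lambda>x. \<Sum>i\<in>UNIV. \<Sum>k\<in>UNIV. (a$i * b$k) * x$i * x$k)"
    by (simp add: fun_eq_iff lform_def sum_3 algebra_simps)
  then show ?thesis
    by (simp add: hessian_quadratic_form)
qed

lemma hessian_lform_power_combination:
  "hessian (\<lambda>x. \<alpha> * lform a x ^ Suc (Suc n) + \<beta> * lform b x ^ Suc (Suc n)) x i j
     = of_nat (Suc (Suc n) * Suc n) * (\<alpha> * lform a x ^ n * a$i * a$j + \<beta> * lform b x ^ n * b$i * b$j)"
proof -
  have "pd j (\<lambda>x. \<alpha> * lform a x ^ Suc (Suc n) + \<beta> * lform b x ^ Suc (Suc n))
      = (\<lambda>x. (of_nat (Suc (Suc n)) * \<alpha> * a$j) * lform a x ^ Suc n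
           + (of_nat (Suc (Suc n)) * \<beta> * b$j) * lform b x ^ Suc n)"
    by (rule ext) (simp only: pd_lform_power_combination)
  then show ?thesis
    unfolding hessian_def by (simp only: pd_lform_power_combination) (simp add: algebra_simps)
qed

definition bilform :: "('n::finite \<Rightarrow> 'n \<Rightarrow> 'a::comm_ring) \<Rightarrow> 'a^'n \<Rightarrow> 'a^'n \<Rightarrow> 'a" where
  "bilform A v w = (\<Sum>i\<in>UNIV. \<Sum>j\<in>UNIV. v$i * A i j * w$j)"

lemma bilform_add_left: "bilform A (v + w) z = bilform A v z + bilform A w z"
  by (simp add: bilform_def sum.distrib algebra_simps)

lemma bilform_add_right: "bilform A z (v + w) = bilform A z v + bilform A z w"
  by (simp add: bilform_def sum.distrib algebra_simps)

lemma bilform_diff_left: "bilform A (v - w) z = bilform A v z - bilform A w z"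
  by (simp add: bilform_def sum_subtractf algebra_simps)

lemma bilform_diff_right: "bilform A z (v - w) = bilform A z v - bilform A z w"
  by (simp add: bilform_def sum_subtractf algebra_simps)

lemma bilform_minus_left: "bilform A (- v) z = - bilform A v z"
  by (simp add: bilform_def sum_negf)

lemma bilform_minus_right: "bilform A z (- v) = - bilform A z v"
  by (simp add: bilform_def sum_negf)

lemma bilform_scale_left: "bilform A (s *s v) z = s * bilform A v z"
  by (simp add: bilform_def sum_distrib_left algebra_simps)

lemma bilform_scale_right: "bilform A z (s *s v) = s * bilform A z v"
  by (simp add: bilform_def sum_distrib_left algebra_simps)

lemmas bilform_linear = bilform_add_left bilform_add_right bilform_diff_left bilform_diff_right
  bilform_minus_left bilform_minus_right bilform_scale_left bilform_scale_right

lemma bilform_commute: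
  assumes "\<And>i j. A i j = A j i"
  shows "bilform A v w = bilform A w v"
  unfolding bilform_def using assms by (subst sum.swap) (simp add: algebra_simps)

definition cross_vec :: "'a::comm_ring^3 \<Rightarrow> 'a^3 \<Rightarrow> 'a^3" where
  "cross_vec a u = vector [a$2 * u$3 - a$3 * u$2, a$3 * u$1 - a$1 * u$3, a$1 * u$2 - a$2 * u$1]"

lemma cross_vec_nth:
  "cross_vec a u $ 1 = a$2 * u$3 - a$3 * u$2"
  "cross_vec a u $ 2 = a$3 * u$1 - a$1 * u$3"
  "cross_vec a u $ 3 = a$1 * u$2 - a$2 * u$1"
  by (simp_all add: cross_vec_def)

lemma cross_vec_add_right: "cross_vec a (v + w) = cross_vec a v + cross_vec a w"
  by (simp add: vec_eq_iff forall_3 cross_vec_nth algebra_simps)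

lemma cross_vec_self: "cross_vec a a = 0"
  by (simp add: vec_eq_iff forall_3 cross_vec_nth algebra_simps)

lemma cross_vec_anticommute: "cross_vec a b = - cross_vec b a"
  by (simp add: vec_eq_iff forall_3 cross_vec_nth algebra_simps)

lemma lform_cross_vec_self: "lform a (cross_vec a u) = 0"
  by (simp add: lform_def sum_3 cross_vec_nth algebra_simps)

lemma lform_cross_vec_cyclic: "lform a (cross_vec b e) = lform e (cross_vec a b)"
  by (simp add: lform_def sum_3 cross_vec_nth algebra_simps)

lemma triple_product_expansion:
  "lform a (cross_vec b c) *s x
     = lform a x *s cross_vec b c + lform b x *s cross_vec c a + lform c x *s cross_vec a b"
  by (simp add: vec_eq_iff forall_3 cross_vec_nth lform_def sum_3 algebra_simps)

lemma cross_vec_nonzero_if_independent: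
  fixes a b :: "'a::field^3"
  assumes indep: "\<forall>s t. s *s a + t *s b = 0 \<longrightarrow> s = 0 \<and> t = 0"
  shows "cross_vec a b \<noteq> 0"
proof
  assume "cross_vec a b = 0"
  then have minors: "a$2 * b$3 = a$3 * b$2" "a$3 * b$1 = a$1 * b$3" "a$1 * b$2 = a$2 * b$1"
    by (auto simp: vec_eq_iff forall_3 cross_vec_nth)
  have "a \<noteq> 0"
    using indep[rule_format, of 1 0] by auto
  then obtain k where k: "a$k \<noteq> 0"
    by (auto simp: vec_eq_iff)
  have "b$k *s a + (- a$k) *s b = 0"
    using exhaust_3[of k] minors by (auto simp: vec_eq_iff forall_3 algebra_simps)
  then show False
    using indep[rule_format, of "b$k" "- a$k"] k by simp
qed

lemma exists_lform_cross_vec_nonzero: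
  assumes "\<forall>s t :: complex. s *s a + t *s b = 0 \<longrightarrow> s = 0 \<and> t = 0"
  obtains e where "lform a (cross_vec b e) \<noteq> 0"
proof -
  obtain k where k: "cross_vec a b $ k \<noteq> 0"
    using cross_vec_nonzero_if_independent[OF assms] by (auto simp: vec_eq_iff)
  have "lform (axis k 1) (cross_vec a b) = cross_vec a b $ k"
    using exhaust_3[of k] by (auto simp: lform_def sum_3 axis_def)
  then show ?thesis
    using k that lform_cross_vec_cyclic by metis
qed

section \<open>The transvectant in terms of Hessians\<close>

definition det_pairing :: "(3 \<Rightarrow> 3 \<Rightarrow> 'a::comm_ring_1) \<Rightarrow> (3 \<Rightarrow> 3 \<Rightarrow> 'a) \<Rightarrow> (3 \<Rightarrow> 3 \<Rightarrow> 'a) \<Rightarrow> 'a" where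
  "det_pairing A B C = (\<Sum>\<sigma>\<in>{\<sigma>. \<sigma> permutes (UNIV :: 3 set)}. \<Sum>\<tau>\<in>{\<tau>. \<tau> permutes (UNIV :: 3 set)}.
      of_int (sign \<sigma> * sign \<tau>) * A (\<sigma> 1) (\<tau> 1) * B (\<sigma> 2) (\<tau> 2) * C (\<sigma> 3) (\<tau> 3))"

lemma J2_eq_det_pairing_hessian:
  "J2 f g h x = det_pairing (hessian f x) (hessian g x) (hessian h x)"
  unfolding J2_def det_pairing_def hessian_def ..

lemma det_pairing_explicit: "det_pairing A B C =
  (A 1 1 * B 2 2 * C 3 3 - A 1 1 * B 2 3 * C 3 2 - A 1 2 * B 2 1 * C 3 3 + A 1 2 * B 2 3 * C 3 1 + A 1 3 * B 2 1 * C 3 2 - A 1 3 * B 2 2 * C 3 1)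
 -(A 1 1 * B 3 2 * C 2 3 - A 1 1 * B 3 3 * C 2 2 - A 1 2 * B 3 1 * C 2 3 + A 1 2 * B 3 3 * C 2 1 + A 1 3 * B 3 1 * C 2 2 - A 1 3 * B 3 2 * C 2 1)
 -(A 2 1 * B 1 2 * C 3 3 - A 2 1 * B 1 3 * C 3 2 - A 2 2 * B 1 1 * C 3 3 + A 2 2 * B 1 3 * C 3 1 + A 2 3 * B 1 1 * C 3 2 - A 2 3 * B 1 2 * C 3 1)
 +(A 2 1 * B 3 2 * C 1 3 - A 2 1 * B 3 3 * C 1 2 - A 2 2 * B 3 1 * C 1 3 + A 2 2 * B 3 3 * C 1 1 + A 2 3 * B 3 1 * C 1 2 - A 2 3 * B 3 2 * C 1 1)
 +(A 3 1 * B 1 2 * C 2 3 - A 3 1 * B 1 3 * C 2 2 - A 3 2 * B 1 1 * C 2 3 + A 3 2 * B 1 3 * C 2 1 + A 3 3 * B 1 1 * C 2 2 - A 3 3 * B 1 2 * C 2 1)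
 -(A 3 1 * B 2 2 * C 1 3 - A 3 1 * B 2 3 * C 1 2 - A 3 2 * B 2 1 * C 1 3 + A 3 2 * B 2 3 * C 1 1 + A 3 3 * B 2 1 * C 1 2 - A 3 3 * B 2 2 * C 1 1)"
proof -
  have "finite {2::3, 3}" "1 \<notin> {2::3, 3}" "finite {3::3}" "2 \<notin> {3::3}"
    by auto
  note insert_perm = sum_over_permutations_insert[OF this(1,2)] sum_over_permutations_insert[OF this(3,4)]
  show ?thesis
    unfolding det_pairing_def UNIV_3 insert_perm permutes_sing
    by (simp add: sign_swap_id permutation_swap_id sign_compose sign_id swap_id_eq algebra_simps)
qed

lemma det_pairing_symmetric_products:
  assumes "\<And>i j. A i j = A j i"
  shows "det_pairing A (\<lambda>i j. a$j * b$i + a$i * b$j) (\<lambda>i j. u$j * u$i + u$i * u$j)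
           = 4 * bilform A (cross_vec a u) (cross_vec b u)"
proof -
  have "A 2 1 = A 1 2" "A 3 1 = A 1 3" "A 3 2 = A 2 3"
    using assms by auto
  then show ?thesis
    unfolding det_pairing_explicit bilform_def sum_3 cross_vec_nth by (simp add: algebra_simps)
qed

lemma J2_lform_product_square:
  assumes "\<And>i j. hessian f x i j = hessian f x j i"
  shows "J2 f (\<lambda>x. lform a x * lform b x) (\<lambda>x. (lform u x)^2) x
           = 4 * bilform (hessian f x) (cross_vec a u) (cross_vec b u)"
proof -
  have "hessian (\<lambda>x. lform a x * lform b x) x = (\<lambda>i j. a$j * b$i + a$i * b$j)"
       "hessian (\<lambda>x. (lform u x)^2) x = (\<lambda>i j. u$j * u$i + u$i * u$j)"
    using hessian_lform_product[of u u x] by (simp_all add: fun_eq_iff hessian_lform_product power2_eq_square)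
  then show ?thesis
    using det_pairing_symmetric_products[where A="hessian f x"] assms
    by (simp add: J2_eq_det_pairing_hessian)
qed

section \<open>Quadratic forms vanishing on the pairs \<open>(a \<times> u, b \<times> u)\<close>\<close>

lemma bilform_cross_vec_vanishing:
  fixes A :: "3 \<Rightarrow> 3 \<Rightarrow> 'a::comm_ring"
  assumes Q: "\<And>u. bilform A (cross_vec a u) (cross_vec b u) = 0"
  shows "bilform A (cross_vec c a) (cross_vec b c) = 0"
    and "bilform A (cross_vec a b) (cross_vec a b) = 0"
    and "bilform A (cross_vec c a) (cross_vec a b) = 0"
    and "bilform A (cross_vec a b) (cross_vec b c) = 0"
proof -
  have ac: "cross_vec a c = - cross_vec c a" and ba: "cross_vec b a = - cross_vec a b"
    by (rule cross_vec_anticommute)+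
  show ca_bc: "bilform A (cross_vec c a) (cross_vec b c) = 0"
    using Q[of c] by (simp add: ac bilform_linear)
  show "bilform A (cross_vec a b) (cross_vec a b) = 0"
    using Q[of "a + b"] by (simp add: cross_vec_add_right cross_vec_self ba bilform_linear)
  show "bilform A (cross_vec c a) (cross_vec a b) = 0"
    using Q[of "a + c"] ca_bc by (simp add: cross_vec_add_right cross_vec_self ac ba bilform_linear)
  show "bilform A (cross_vec a b) (cross_vec b c) = 0"
    using Q[of "b + c"] ca_bc by (simp add: cross_vec_add_right cross_vec_self ac bilform_linear)
qed

lemma bilform_decomposition:
  assumes sym: "\<And>i j. A i j = A j i"
    and Q: "\<And>u. bilform A (cross_vec a u) (cross_vec b u) = 0"
  shows "(lform a (cross_vec b c))^2 * bilform A x x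
     = (lform a x)^2 * bilform A (cross_vec b c) (cross_vec b c)
       + (lform b x)^2 * bilform A (cross_vec c a) (cross_vec c a)"
proof -
  note vanish = bilform_cross_vec_vanishing(1,3,4)[OF Q, of c] bilform_cross_vec_vanishing(2)[OF Q]
  have commute: "bilform A v w = bilform A w v" for v w
    by (rule bilform_commute, rule sym)
  have vanish': "bilform A (cross_vec b c) (cross_vec c a) = 0"
      "bilform A (cross_vec a b) (cross_vec c a) = 0"
      "bilform A (cross_vec b c) (cross_vec a b) = 0"
    using vanish commute[of "cross_vec b c" "cross_vec c a"] commute[of "cross_vec a b" "cross_vec c a"]
      commute[of "cross_vec b c" "cross_vec a b"] by simp_all
  let ?D = "lform a (cross_vec b c)"
  have "?D^2 * bilform A x x = bilform A (?D *s x) (?D *s x)"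
    by (simp add: bilform_linear power2_eq_square)
  also have "\<dots> = bilform A
      (lform a x *s cross_vec b c + lform b x *s cross_vec c a + lform c x *s cross_vec a b)
      (lform a x *s cross_vec b c + lform b x *s cross_vec c a + lform c x *s cross_vec a b)"
    by (simp only: triple_product_expansion)
  also have "\<dots> = (lform a x)^2 * bilform A (cross_vec b c) (cross_vec b c)
       + (lform b x)^2 * bilform A (cross_vec c a) (cross_vec c a)"
    by (simp only: bilform_linear) (simp add: vanish vanish' power2_eq_square algebra_simps)
  finally show ?thesis .
qed

lemma bilform_eq_sum_of_squares:
  assumes indep: "\<forall>s t :: complex. s *s a + t *s b = 0 \<longrightarrow> s = 0 \<and> t = 0"
    and sym: "\<And>i j. A i j = A j i"
    and Q: "\<And>u. bilform A (cross_vec a u) (cross_vec b u) = 0"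
  obtains \<alpha> \<beta> where "\<And>x. bilform A x x = \<alpha> * (lform a x)^2 + \<beta> * (lform b x)^2"
proof -
  obtain e where D: "lform a (cross_vec b e) \<noteq> 0"
    using exists_lform_cross_vec_nonzero[OF indep] .
  let ?D = "lform a (cross_vec b e)"
  show ?thesis
  proof
    fix x
    show "bilform A x x
      = bilform A (cross_vec b e) (cross_vec b e) / ?D^2 * (lform a x)^2
        + bilform A (cross_vec e a) (cross_vec e a) / ?D^2 * (lform b x)^2"
      using bilform_decomposition[OF sym Q, of e x] D by (simp add: field_simps)
  qed
qed

lemma bilform_rank_two_cross_vec:
  fixes a b :: "complex^3"
  shows "bilform (\<lambda>i j. \<alpha> * a$i * a$j + \<beta> * b$i * b$j) (cross_vec a u) (cross_vec b u) = 0"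
proof -
  have "bilform (\<lambda>i j. \<alpha> * a$i * a$j + \<beta> * b$i * b$j) y z
      = \<alpha> * lform a y * lform a z + \<beta> * lform b y * lform b z" for y z
    by (simp add: bilform_def lform_def sum_3 algebra_simps)
  then show ?thesis
    by (simp add: lform_cross_vec_self)
qed

section \<open>Cubic forms\<close>

definition cubic_hessian :: "(3 \<Rightarrow> 3 \<Rightarrow> 3 \<Rightarrow> complex) \<Rightarrow> complex^3 \<Rightarrow> 3 \<Rightarrow> 3 \<Rightarrow> complex" where
  "cubic_hessian c y i j =
     (\<Sum>m\<in>UNIV. (c i j m + c i m j + c j i m + c j m i + c m i j + c m j i) * y$m)"

lemma hessian_cubic_form:
  "hessian (\<lambda>x. \<Sum>i\<in>UNIV. \<Sum>k\<in>UNIV. \<Sum>m\<in>UNIV. c i k m * x$i * x$k * x$m) x i j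
     = cubic_hessian c x i j"
  unfolding hessian_def pd_cubic_form[abs_def] pd_quadratic_form cubic_hessian_def
  by (rule sum.cong) (auto simp: algebra_simps)

lemma cubic_hessian_commute: "cubic_hessian c y i j = cubic_hessian c y j i"
  by (simp add: cubic_hessian_def sum_3 algebra_simps)

lemma bilform_cubic_hessian_swap: "bilform (cubic_hessian c y) v w = bilform (cubic_hessian c v) y w"
  by (simp add: bilform_def cubic_hessian_def sum_3 algebra_simps)

lemma bilform_cubic_hessian_commute: "bilform (cubic_hessian c y) v w = bilform (cubic_hessian c y) w v"
  by (rule bilform_commute, rule cubic_hessian_commute)

lemma bilform_cubic_hessian_add:
  "bilform (cubic_hessian c (y + z)) v w = bilform (cubic_hessian c y) v w + bilform (cubic_hessian c z) v w"
  by (metis bilform_cubic_hessian_swap bilform_add_left)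

lemma bilform_cubic_hessian_scale:
  "bilform (cubic_hessian c (s *s y)) v w = s * bilform (cubic_hessian c y) v w"
  by (metis bilform_cubic_hessian_swap bilform_scale_left)

lemma quadratic_form_eq_bilform:
  fixes c :: "3 \<Rightarrow> 3 \<Rightarrow> complex"
  shows "(\<Sum>i\<in>UNIV. \<Sum>k\<in>UNIV. c i k * x$i * x$k) = bilform (\<lambda>i j. c j i + c i j) x x / 2"
  by (simp add: bilform_def sum_3 algebra_simps)

lemma cubic_form_eq_bilform:
  "(\<Sum>i\<in>UNIV. \<Sum>k\<in>UNIV. \<Sum>m\<in>UNIV. c i k m * x$i * x$k * x$m) = bilform (cubic_hessian c x) x x / 6"
  by (simp add: bilform_def cubic_hessian_def sum_3 algebra_simps)

lemma cubic_hessian_decomposition: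
  assumes Q: "\<And>y u. bilform (cubic_hessian c y) (cross_vec a u) (cross_vec b u) = 0"
  shows "(lform a (cross_vec b e))^3 * bilform (cubic_hessian c x) x x
     = (lform a x)^3 * bilform (cubic_hessian c (cross_vec b e)) (cross_vec b e) (cross_vec b e)
       + (lform b x)^3 * bilform (cubic_hessian c (cross_vec e a)) (cross_vec e a) (cross_vec e a)"
proof -
  define p q r where "p = cross_vec b e" and "q = cross_vec e a" and "r = cross_vec a b"
  define D where "D = lform a p"
  let ?T = "\<lambda>y v w. bilform (cubic_hessian c y) v w"
  have vanish: "?T y q p = 0" "?T y q r = 0" "?T y r p = 0" for y
    using bilform_cross_vec_vanishing[OF Q[of y]] unfolding p_def q_def r_def by blast+
  have x_expansion: "D *s x = lform a x *s p + lform b x *s q + lform e x *s r"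
    unfolding D_def p_def q_def r_def by (rule triple_product_expansion)
  have zero_p: "?T q p p = 0" "?T r p p = 0"
    using vanish(1,3)[of p] bilform_cubic_hessian_swap by metis+
  have zero_q: "?T p q q = 0" "?T r q q = 0"
    using vanish(1,2)[of q] bilform_cubic_hessian_swap bilform_cubic_hessian_commute by metis+
  have "D * ?T x p p = ?T (D *s x) p p"
    by (simp add: bilform_cubic_hessian_scale)
  also have "\<dots> = lform a x * ?T p p p + lform b x * ?T q p p + lform e x * ?T r p p"
    by (simp add: x_expansion bilform_cubic_hessian_add bilform_cubic_hessian_scale)
  finally have p_coeff: "D * ?T x p p = lform a x * ?T p p p"
    by (simp add: zero_p)
  have "D * ?T x q q = ?T (D *s x) q q"
    by (simp add: bilform_cubic_hessian_scale)
  also have "\<dots> = lform a x * ?T p q q + lform b x * ?T q q q + lform e x * ?T r q q"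
    by (simp add: x_expansion bilform_cubic_hessian_add bilform_cubic_hessian_scale)
  finally have q_coeff: "D * ?T x q q = lform b x * ?T q q q"
    by (simp add: zero_q)
  have quadratic: "D^2 * ?T x x x = (lform a x)^2 * ?T x p p + (lform b x)^2 * ?T x q q"
    unfolding D_def p_def q_def by (rule bilform_decomposition[OF cubic_hessian_commute Q])
  have "D^3 * ?T x x x = D * (D^2 * ?T x x x)"
    by (simp add: power3_eq_cube power2_eq_square)
  also have "\<dots> = (lform a x)^2 * (D * ?T x p p) + (lform b x)^2 * (D * ?T x q q)"
    by (simp only: quadratic) (simp add: algebra_simps)
  also have "\<dots> = (lform a x)^3 * ?T p p p + (lform b x)^3 * ?T q q q"
    by (simp add: p_coeff q_coeff power3_eq_cube power2_eq_square)
  finally show ?thesis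
    unfolding D_def p_def q_def r_def .
qed

lemma cubic_hessian_eq_sum_of_cubes:
  assumes indep: "\<forall>s t :: complex. s *s a + t *s b = 0 \<longrightarrow> s = 0 \<and> t = 0"
    and Q: "\<And>y u. bilform (cubic_hessian c y) (cross_vec a u) (cross_vec b u) = 0"
  obtains \<alpha> \<beta> where "\<And>x. bilform (cubic_hessian c x) x x = \<alpha> * (lform a x)^3 + \<beta> * (lform b x)^3"
proof -
  obtain e where D: "lform a (cross_vec b e) \<noteq> 0"
    using exists_lform_cross_vec_nonzero[OF indep] .
  let ?D = "lform a (cross_vec b e)"
  let ?T = "\<lambda>v. bilform (cubic_hessian c v) v v"
  show ?thesis
  proof
    fix x
    show "?T x = ?T (cross_vec b e) / ?D^3 * (lform a x)^3 + ?T (cross_vec e a) / ?D^3 * (lform b x)^3"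
      using cubic_hessian_decomposition[OF Q, of e x] D by (simp add: field_simps)
  qed
qed

lemma J2_lform_power_combination:
  fixes a b :: "complex^3"
  shows "J2 (\<lambda>x. \<alpha> * lform a x ^ Suc (Suc n) + \<beta> * lform b x ^ Suc (Suc n))
            (\<lambda>x. lform a x * lform b x) (\<lambda>x. (lform u x)^2) x = 0"
proof -
  let ?f = "\<lambda>x. \<alpha> * lform a x ^ Suc (Suc n) + \<beta> * lform b x ^ Suc (Suc n)"
  let ?k = "of_nat (Suc (Suc n) * Suc n) :: complex"
  have hessian: "hessian ?f x
      = (\<lambda>i j. (?k * \<alpha> * lform a x ^ n) * a$i * a$j + (?k * \<beta> * lform b x ^ n) * b$i * b$j)"
    unfolding fun_eq_iff hessian_lform_power_combination by (simp add: algebra_simps)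
  have "J2 ?f (\<lambda>x. lform a x * lform b x) (\<lambda>x. (lform u x)^2) x
      = 4 * bilform (hessian ?f x) (cross_vec a u) (cross_vec b u)"
    by (rule J2_lform_product_square) (unfold hessian, simp add: algebra_simps)
  then show ?thesis
    unfolding hessian bilform_rank_two_cross_vec by simp
qed

lemma J2_vanishes_iff_quadratic:
  assumes indep: "\<forall>s t :: complex. s *s a + t *s b = 0 \<longrightarrow> s = 0 \<and> t = 0"
    and "is_quadratic_form f"
  shows "(\<forall>u x. J2 f (\<lambda>x. lform a x * lform b x) (\<lambda>x. (lform u x)^2) x = 0) \<longleftrightarrow>
         (\<exists>a0 b0 :: complex. f = (\<lambda>x. a0 * (lform a x)^2 + b0 * (lform b x)^2))"
proof
  assume J2_zero: "\<forall>u x. J2 f (\<lambda>x. lform a x * lform b x) (\<lambda>x. (lform u x)^2) x = 0"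
  obtain c where f: "f = (\<lambda>x. \<Sum>i\<in>UNIV. \<Sum>j\<in>UNIV. c i j * x$i * x$j)"
    using \<open>is_quadratic_form f\<close> unfolding is_quadratic_form_def by blast
  define A where "A = (\<lambda>i j. c j i + c i j)"
  have hessian: "hessian f x = A" for x
    unfolding f A_def by (simp add: fun_eq_iff hessian_quadratic_form)
  have "bilform A (cross_vec a u) (cross_vec b u) = 0" for u
    using J2_zero J2_lform_product_square[of f 0 a b u] by (simp add: hessian A_def)
  then obtain \<alpha> \<beta> where "\<And>x. bilform A x x = \<alpha> * (lform a x)^2 + \<beta> * (lform b x)^2"
    using bilform_eq_sum_of_squares[OF indep, of A] unfolding A_def by auto
  then have "f = (\<lambda>x. \<alpha> / 2 * (lform a x)^2 + \<beta> / 2 * (lform b x)^2)"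
    unfolding f quadratic_form_eq_bilform A_def[symmetric] by (simp add: fun_eq_iff add_divide_distrib)
  then show "\<exists>a0 b0. f = (\<lambda>x. a0 * (lform a x)^2 + b0 * (lform b x)^2)"
    by blast
next
  assume "\<exists>a0 b0. f = (\<lambda>x. a0 * (lform a x)^2 + b0 * (lform b x)^2)"
  then show "\<forall>u x. J2 f (\<lambda>x. lform a x * lform b x) (\<lambda>x. (lform u x)^2) x = 0"
    using J2_lform_power_combination[where n=0] by (auto simp: numeral_2_eq_2)
qed

lemma J2_vanishes_iff_cubic:
  assumes indep: "\<forall>s t :: complex. s *s a + t *s b = 0 \<longrightarrow> s = 0 \<and> t = 0"
    and "is_cubic_form f"
  shows "(\<forall>u x. J2 f (\<lambda>x. lform a x * lform b x) (\<lambda>x. (lform u x)^2) x = 0) \<longleftrightarrow>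
         (\<exists>a0 b0 :: complex. f = (\<lambda>x. a0 * (lform a x)^3 + b0 * (lform b x)^3))"
proof
  assume J2_zero: "\<forall>u x. J2 f (\<lambda>x. lform a x * lform b x) (\<lambda>x. (lform u x)^2) x = 0"
  obtain c where f: "f = (\<lambda>x. \<Sum>i\<in>UNIV. \<Sum>j\<in>UNIV. \<Sum>k\<in>UNIV. c i j k * x$i * x$j * x$k)"
    using \<open>is_cubic_form f\<close> unfolding is_cubic_form_def by blast
  have hessian: "hessian f x = cubic_hessian c x" for x
    unfolding f by (simp add: fun_eq_iff hessian_cubic_form)
  have "bilform (cubic_hessian c x) (cross_vec a u) (cross_vec b u) = 0" for x u
    using J2_zero J2_lform_product_square[of f x a b u] by (simp add: hessian cubic_hessian_commute)
  then obtain \<alpha> \<beta> where "\<And>x. bilform (cubic_hessian c x) x x = \<alpha> * (lform a x)^3 + \<beta> * (lform b x)^3"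
    using cubic_hessian_eq_sum_of_cubes[OF indep] by metis
  then have "f = (\<lambda>x. \<alpha> / 6 * (lform a x)^3 + \<beta> / 6 * (lform b x)^3)"
    unfolding f cubic_form_eq_bilform by (simp add: fun_eq_iff add_divide_distrib)
  then show "\<exists>a0 b0. f = (\<lambda>x. a0 * (lform a x)^3 + b0 * (lform b x)^3)"
    by blast
next
  assume "\<exists>a0 b0. f = (\<lambda>x. a0 * (lform a x)^3 + b0 * (lform b x)^3)"
  then show "\<forall>u x. J2 f (\<lambda>x. lform a x * lform b x) (\<lambda>x. (lform u x)^2) x = 0"
    using J2_lform_power_combination[where n=1] by (auto simp: numeral_3_eq_3)
qed

theorem lemma5p3:
  fixes a b :: "complex^3"
  assumes indep: "\<forall>s t :: complex. s *s a + t *s b = 0 \<longrightarrow> s = 0 \<and> t = 0"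
  shows "(\<forall>f. is_quadratic_form f \<longrightarrow>
            ((\<forall>u x. J2 f (\<lambda>x. lform a x * lform b x) (\<lambda>x. (lform u x)^2) x = 0) \<longleftrightarrow>
             (\<exists>a0 b0 :: complex. f = (\<lambda>x. a0 * (lform a x)^2 + b0 * (lform b x)^2))))
       \<and> (\<forall>f. is_cubic_form f \<longrightarrow>
            ((\<forall>u x. J2 f (\<lambda>x. lform a x * lform b x) (\<lambda>x. (lform u x)^2) x = 0) \<longleftrightarrow>
             (\<exists>a0 b0 :: complex. f = (\<lambda>x. a0 * (lform a x)^3 + b0 * (lform b x)^3))))"
  using J2_vanishes_iff_quadratic[OF indep] J2_vanishes_iff_cubic[OF indep] by blast

end
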